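(* The continuum $|\mathbb G|$ is one-dimensional.
   Context: A graph is a pair $A=(V(A),E(A))$ with $E(A)$ reflexive and symmetric; a topological graph additionally has $V$ compact, second countable, zero-dimensional and $E$ closed. Epimorphisms are (continuous) edge-preserving maps surjective on vertices and edges. A vertex set $S$ is disconnected if it splits into two nonempty closed subsets with no edges between them; otherwise connected; components are maximal connected subsets. An epimorphism $f\colon A\to B$ is confluent if for every connected $Q\subseteq V(B)$ each component $C$ of $f^{-1}(Q)$ satisfies $f(C)=Q$. $\mathcal G$ is the class of finite connected graphs with confluent epimorphisms, and $\mathbb G$ is its projective Fraïssé limit: the unique topological graph such that (1) every $A\in\mathcal G$ is a confluent epimorphic image of $\mathbb G$; (2) for $A,B\in\mathcal G$ and confluent epimorphisms $f\colon\mathbb G\to A$, $g\colon B\to A$ there is a confluent epimorphism $h\colon\mathbb G\to B$ with $f=g\circ h$; (3) for each $\varepsilon>0$ some confluent epimorphism from $\mathbb G$ onto a member of $\mathcal G$ has all point-preimages of diameter $<\varepsilon$. The edge relation of $\mathbb G$ is an equivalence relation and $|\mathbb G|=V(\mathbb G)/E(\mathbb G)$ is its topological realization. *)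

theory Defs
  imports "HOL-Analysis.Analysis"
begin

text \<open>A graph is given by a topology X (vertex set = topspace X) and an edge relation E.
  Finite graphs carry the discrete topology.\<close>

definition is_graph :: "'a topology \<Rightarrow> ('a \<times> 'a) set \<Rightarrow> bool" where
  "is_graph X E \<longleftrightarrow> E \<subseteq> topspace X \<times> topspace X \<and>
     (\<forall>x\<in>topspace X. (x, x) \<in> E) \<and> (\<forall>x y. (x, y) \<in> E \<longrightarrow> (y, x) \<in> E)"

definition zero_dimensional :: "'a topology \<Rightarrow> bool" where
  "zero_dimensional X \<longleftrightarrow>
     (\<forall>U x. openin X U \<and> x \<in> U \<longrightarrow> (\<exists>C. openin X C \<and> closedin X C \<and> x \<in> C \<and> C \<subseteq> U))"

definition topological_graph :: "'a topology \<Rightarrow> ('a \<times> 'a) set \<Rightarrow> bool" where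
  "topological_graph X E \<longleftrightarrow> is_graph X E \<and> compact_space X \<and> second_countable X \<and>
     zero_dimensional X \<and> closedin (prod_topology X X) E"

definition gr_disconnected :: "'a topology \<Rightarrow> ('a \<times> 'a) set \<Rightarrow> 'a set \<Rightarrow> bool" where
  "gr_disconnected X E S \<longleftrightarrow>
     (\<exists>P Q. P \<noteq> {} \<and> Q \<noteq> {} \<and> P \<union> Q = S \<and> P \<inter> Q = {} \<and>
        closedin (subtopology X S) P \<and> closedin (subtopology X S) Q \<and>
        (\<forall>p\<in>P. \<forall>q\<in>Q. (p, q) \<notin> E))"

definition gr_connected :: "'a topology \<Rightarrow> ('a \<times> 'a) set \<Rightarrow> 'a set \<Rightarrow> bool" where
  "gr_connected X E S \<longleftrightarrow> S \<subseteq> topspace X \<and> \<not> gr_disconnected X E S"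

definition gr_component :: "'a topology \<Rightarrow> ('a \<times> 'a) set \<Rightarrow> 'a set \<Rightarrow> 'a set \<Rightarrow> bool" where
  "gr_component X E S C \<longleftrightarrow> C \<subseteq> S \<and> gr_connected X E C \<and>
     (\<forall>D. C \<subseteq> D \<and> D \<subseteq> S \<and> gr_connected X E D \<longrightarrow> D = C)"

definition epimorphism ::
  "'a topology \<Rightarrow> ('a \<times> 'a) set \<Rightarrow> 'b topology \<Rightarrow> ('b \<times> 'b) set \<Rightarrow> ('a \<Rightarrow> 'b) \<Rightarrow> bool" where
  "epimorphism X EA Y EB f \<longleftrightarrow> continuous_map X Y f \<and>
     (\<forall>a b. (a, b) \<in> EA \<longrightarrow> (f a, f b) \<in> EB) \<and>
     f ` topspace X = topspace Y \<and> (\<lambda>(a, b). (f a, f b)) ` EA = EB"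

definition confluent_epi ::
  "'a topology \<Rightarrow> ('a \<times> 'a) set \<Rightarrow> 'b topology \<Rightarrow> ('b \<times> 'b) set \<Rightarrow> ('a \<Rightarrow> 'b) \<Rightarrow> bool" where
  "confluent_epi X EA Y EB f \<longleftrightarrow> epimorphism X EA Y EB f \<and>
     (\<forall>Q. gr_connected Y EB Q \<longrightarrow>
        (\<forall>C. gr_component X EA {x \<in> topspace X. f x \<in> Q} C \<longrightarrow> f ` C = Q))"

text \<open>The class \<open>\<G>\<close>: finite (nonempty) connected graphs; vertices taken in nat
  (every finite graph is isomorphic to one of these), with the discrete topology.\<close>

definition fin_conn_graph :: "nat set \<Rightarrow> (nat \<times> nat) set \<Rightarrow> bool" where
  "fin_conn_graph VA EA \<longleftrightarrow> finite VA \<and> VA \<noteq> {} \<and>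
     is_graph (discrete_topology VA) EA \<and> gr_connected (discrete_topology VA) EA VA"

text \<open>The projective Fraisse limit of \<open>\<G>\<close>, characterised by (1)-(3); its vertex set is
  a subset V of a metric space (so that diameters make sense).\<close>

definition fraisse_limit_G :: "'a::metric_space set \<Rightarrow> ('a \<times> 'a) set \<Rightarrow> bool" where
  "fraisse_limit_G V E \<longleftrightarrow>
     topological_graph (top_of_set V) E \<and>
     (\<forall>VA EA. fin_conn_graph VA EA \<longrightarrow>
        (\<exists>f. confluent_epi (top_of_set V) E (discrete_topology VA) EA f)) \<and>
     (\<forall>VA EA VB EB f g. fin_conn_graph VA EA \<and> fin_conn_graph VB EB \<and>
        confluent_epi (top_of_set V) E (discrete_topology VA) EA f \<and>
        confluent_epi (discrete_topology VB) EB (discrete_topology VA) EA g \<longrightarrow>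
        (\<exists>h. confluent_epi (top_of_set V) E (discrete_topology VB) EB h \<and>
             (\<forall>x\<in>V. f x = g (h x)))) \<and>
     (\<forall>\<epsilon>>0. \<exists>VA EA f. fin_conn_graph VA EA \<and>
        confluent_epi (top_of_set V) E (discrete_topology VA) EA f \<and>
        (\<forall>a\<in>VA. diameter {x \<in> V. f x = a} < \<epsilon>))"

text \<open>Quotient topology on the set of classes \<open>V // E\<close> (the quotient of X by the map
  \<open>x \<mapsto> E``{x}\<close>).\<close>

definition realization :: "'a topology \<Rightarrow> ('a \<times> 'a) set \<Rightarrow> 'a set topology" where
  "realization X E = topology (\<lambda>U. U \<subseteq> topspace X // E \<and>
      openin X {x \<in> topspace X. E `` {x} \<in> U})"

lemma istopology_realization:
  "istopology (\<lambda>U. U \<subseteq> topspace X // E \<and> openin X {x \<in> topspace X. E `` {x} \<in> U})"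
proof -
  have i: "{x \<in> topspace X. E `` {x} \<in> S \<inter> T} =
           {x \<in> topspace X. E `` {x} \<in> S} \<inter> {x \<in> topspace X. E `` {x} \<in> T}" for S T
    by auto
  have u: "{x \<in> topspace X. E `` {x} \<in> \<Union>K} = (\<Union>U\<in>K. {x \<in> topspace X. E `` {x} \<in> U})" for K
    by auto
  show ?thesis unfolding istopology_def
  proof (rule conjI; intro allI impI)
    fix S T assume "S \<subseteq> topspace X // E \<and> openin X {x \<in> topspace X. E `` {x} \<in> S}"
      and "T \<subseteq> topspace X // E \<and> openin X {x \<in> topspace X. E `` {x} \<in> T}"
    then show "S \<inter> T \<subseteq> topspace X // E \<and> openin X {x \<in> topspace X. E `` {x} \<in> S \<inter> T}"
      unfolding i by auto
  next
    fix K assume "\<forall>U\<in>K. U \<subseteq> topspace X // E \<and> openin X {x \<in> topspace X. E `` {x} \<in> U}"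
    then show "\<Union>K \<subseteq> topspace X // E \<and> openin X {x \<in> topspace X. E `` {x} \<in> \<Union>K}"
      unfolding u by (auto intro!: openin_Union)
  qed
qed

definition covering_dim_le :: "'a topology \<Rightarrow> nat \<Rightarrow> bool" where
  "covering_dim_le X n \<longleftrightarrow>
     (\<forall>\<U>. finite \<U> \<and> (\<forall>U\<in>\<U>. openin X U) \<and> \<Union>\<U> = topspace X \<longrightarrow>
        (\<exists>\<V>. finite \<V> \<and> (\<forall>W\<in>\<V>. openin X W) \<and> \<Union>\<V> = topspace X \<and>
             (\<forall>W\<in>\<V>. \<exists>U\<in>\<U>. W \<subseteq> U) \<and>
             (\<forall>x\<in>topspace X. card {W\<in>\<V>. x \<in> W} \<le> n + 1)))"

definition covering_dim_eq :: "'a topology \<Rightarrow> nat \<Rightarrow> bool" where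
  "covering_dim_eq X n \<longleftrightarrow> covering_dim_le X n \<and> (\<forall>m<n. \<not> covering_dim_le X m)"

end

theory Submission
  imports Defs
begin

(* The edge relation of G is an equivalence relation whose classes have at most two points:
   if x - y - z were a path through three distinct points, a fine enough confluent map f onto
   a finite graph A would keep it on three distinct vertices, and by the extension property f
   would factor through the graph obtained from A by splitting the middle vertex, in which the
   path has no lift.

   Hence |G| has covering dimension at most 1. Given an open cover, pull it back to G and take
   a fine clopen partition of G such that any two blocks joined by an edge lie in one member of
   the cover. The classes inside a single block form one disjoint open refinement; for the
   two-point classes meeting two blocks, the points of a block joined to different blocks can be
   separated by disjoint clopen sets, and the classes inside the union of two facing such sets
   form a second one.

   The dimension is not 0: G is connected, since under a fine map a separation of G would induce
   one of a connected finite graph, so |G| is a connected space with two distinct closed points. *)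

section \<open>Finite graphs\<close>

lemma gr_disconnected_discrete:
  assumes "S \<subseteq> U"
  shows "gr_disconnected (discrete_topology U) E S \<longleftrightarrow>
    (\<exists>P Q. P \<noteq> {} \<and> Q \<noteq> {} \<and> P \<union> Q = S \<and> P \<inter> Q = {} \<and> (\<forall>p\<in>P. \<forall>q\<in>Q. (p, q) \<notin> E))"
proof -
  have "closedin (subtopology (discrete_topology U) S) P \<longleftrightarrow> P \<subseteq> S" for P
    using assms by (simp add: subtopology_discrete_topology Int_absorb1)
  then show ?thesis
    unfolding gr_disconnected_def by blast
qed

lemma gr_connected_discrete:
  "gr_connected (discrete_topology U) E S \<longleftrightarrow> S \<subseteq> U \<and>
    \<not> (\<exists>P Q. P \<noteq> {} \<and> Q \<noteq> {} \<and> P \<union> Q = S \<and> P \<inter> Q = {} \<and> (\<forall>p\<in>P. \<forall>q\<in>Q. (p, q) \<notin> E))"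
  by (cases "S \<subseteq> U") (simp_all add: gr_connected_def gr_disconnected_discrete)

lemma gr_connected_discrete_clique:
  assumes "S \<subseteq> U" and "\<And>x y. x \<in> S \<Longrightarrow> y \<in> S \<Longrightarrow> (x, y) \<in> E"
  shows "gr_connected (discrete_topology U) E S"
  unfolding gr_connected_discrete
proof (intro conjI notI \<open>S \<subseteq> U\<close>, elim exE conjE)
  fix P Q assume "P \<noteq> {}" "Q \<noteq> {}" "P \<union> Q = S" "\<forall>p\<in>P. \<forall>q\<in>Q. (p, q) \<notin> E"
  then show False
    using assms(2) by blast
qed

lemma confluent_epi_if_preimages_connected:
  assumes epi: "epimorphism X EA Y EB f"
    and conn: "\<And>Q. gr_connected Y EB Q \<Longrightarrow> gr_connected X EA {x \<in> topspace X. f x \<in> Q}"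
  shows "confluent_epi X EA Y EB f"
  unfolding confluent_epi_def
proof (intro conjI epi allI impI)
  fix Q C
  assume Q: "gr_connected Y EB Q" and C: "gr_component X EA {x \<in> topspace X. f x \<in> Q} C"
  then have "C = {x \<in> topspace X. f x \<in> Q}"
    using conn[OF Q] unfolding gr_component_def by blast
  moreover have "Q \<subseteq> f ` topspace X"
    using Q epi unfolding gr_connected_def epimorphism_def by blast
  ultimately show "f ` C = Q" by auto
qed

lemma gr_connected_discrete_side:
  assumes "gr_connected (discrete_topology U) E F"
    and "F \<subseteq> P \<union> R" "P \<inter> R = {}" "\<forall>p\<in>P. \<forall>q\<in>R. (p, q) \<notin> E"
  shows "F \<subseteq> P \<or> F \<subseteq> R"
proof (rule ccontr)
  assume "\<not> ?thesis"
  then have split: "F \<inter> P \<noteq> {}" "F \<inter> R \<noteq> {}" "(F \<inter> P) \<union> (F \<inter> R) = F"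
    using assms(2) by auto
  have "\<exists>P' R'. P' \<noteq> {} \<and> R' \<noteq> {} \<and> P' \<union> R' = F \<and> P' \<inter> R' = {} \<and>
      (\<forall>p\<in>P'. \<forall>q\<in>R'. (p, q) \<notin> E)"
    using assms(3,4) by (intro exI[of _ "F \<inter> P"] exI[of _ "F \<inter> R"] conjI split) auto
  then show False
    using assms(1) unfolding gr_connected_discrete by simp
qed

text \<open>A separation of the preimage cannot cut a connected fibre, so it is induced by a
  separation of Q; edges across the latter would lift to edges across the former.\<close>
lemma discrete_epi_preimage_connected:
  assumes epi: "epimorphism (discrete_topology VB) EB (discrete_topology VA) EA g"
    and EB: "EB \<subseteq> VB \<times> VB"
    and fibres: "\<And>a. a \<in> VA \<Longrightarrow> gr_connected (discrete_topology VB) EB {u \<in> VB. g u = a}"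
    and Q: "gr_connected (discrete_topology VA) EA Q"
  shows "gr_connected (discrete_topology VB) EB {u \<in> VB. g u \<in> Q}"
proof -
  let ?S = "{u \<in> VB. g u \<in> Q}"
  have gVB: "g ` VB = VA" and lift: "EA = (\<lambda>(u, v). (g u, g v)) ` EB"
    using epi unfolding epimorphism_def by auto
  have QA: "Q \<subseteq> VA"
    using Q unfolding gr_connected_def by simp
  have "\<not> gr_disconnected (discrete_topology VB) EB ?S"
  proof
    assume "gr_disconnected (discrete_topology VB) EB ?S"
    then obtain P R where PR: "P \<noteq> {}" "R \<noteq> {}" "P \<union> R = ?S" "P \<inter> R = {}"
      and noedge: "\<forall>p\<in>P. \<forall>q\<in>R. (p, q) \<notin> EB"
      by (auto simp: gr_disconnected_discrete[of ?S VB])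
    have side: "{u \<in> VB. g u = a} \<subseteq> P \<or> {u \<in> VB. g u = a} \<subseteq> R" if "a \<in> Q" for a
    proof (rule gr_connected_discrete_side[OF fibres _ PR(4) noedge])
      show "a \<in> VA" "{u \<in> VB. g u = a} \<subseteq> P \<union> R"
        using PR(3) QA that by auto
    qed
    define PA where "PA = {a \<in> Q. {u \<in> VB. g u = a} \<subseteq> P}"
    have inP: "u \<in> P \<longleftrightarrow> g u \<in> PA" if "u \<in> ?S" for u
      using that side[of "g u"] PR(4) unfolding PA_def by blast
    have "PA \<noteq> {}" "Q - PA \<noteq> {}"
      using PR(1-4) inP by blast+
    moreover have "(p, q) \<notin> EA" if "p \<in> PA" "q \<in> Q - PA" for p q
    proof
      assume "(p, q) \<in> EA"
      then obtain u w where "(u, w) \<in> EB" "g u = p" "g w = q"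
        using lift by auto
      moreover have "u \<in> ?S" "w \<in> ?S"
        using EB \<open>(u, w) \<in> EB\<close> \<open>g u = p\<close> \<open>g w = q\<close> that unfolding PA_def by auto
      ultimately show False
        using inP PR(3) noedge that by blast
    qed
    moreover have "PA \<union> (Q - PA) = Q" "PA \<inter> (Q - PA) = {}"
      unfolding PA_def by auto
    ultimately have "\<exists>P' R'. P' \<noteq> {} \<and> R' \<noteq> {} \<and> P' \<union> R' = Q \<and> P' \<inter> R' = {} \<and>
        (\<forall>p\<in>P'. \<forall>q\<in>R'. (p, q) \<notin> EA)"
      by (intro exI[of _ PA] exI[of _ "Q - PA"]) simp
    then show False
      using Q unfolding gr_connected_discrete by simp
  qed
  then show ?thesis
    unfolding gr_connected_def by auto
qed

section \<open>Splitting a vertex\<close>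

text \<open>Splitting the middle vertex b of a path a - b - c: b gets a twin n, b keeps every
  neighbour except c and n every neighbour except a, so the path no longer lifts.\<close>

definition split_map :: "'a \<Rightarrow> 'a \<Rightarrow> 'a \<Rightarrow> 'a" where
  "split_map b n v = (if v = n then b else v)"

definition split_edges :: "('a \<times> 'a) set \<Rightarrow> 'a \<Rightarrow> 'a \<Rightarrow> 'a \<Rightarrow> 'a \<Rightarrow> ('a \<times> 'a) set" where
  "split_edges EA a b c n =
     {(u, v). (split_map b n u, split_map b n v) \<in> EA} - {(b, c), (c, b), (n, a), (a, n)}"

context
  fixes VA :: "'a set" and EA a b c n
  assumes graph: "is_graph (discrete_topology VA) EA"
    and ab: "(a, b) \<in> EA" and bc: "(b, c) \<in> EA"
    and distinct: "a \<noteq> b" "b \<noteq> c" "a \<noteq> c"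
    and fresh: "n \<notin> VA"
begin

private lemma EA_sub: "EA \<subseteq> VA \<times> VA" and EA_refl: "x \<in> VA \<Longrightarrow> (x, x) \<in> EA"
  and EA_sym: "(x, y) \<in> EA \<Longrightarrow> (y, x) \<in> EA"
  using graph unfolding is_graph_def by auto

private lemma abc_in: "a \<in> VA" "b \<in> VA" "c \<in> VA"
  using ab bc EA_sub by auto

lemma split_edges_subset: "split_edges EA a b c n \<subseteq> insert n VA \<times> insert n VA"
  using EA_sub by (auto simp: split_edges_def split_map_def split: if_splits)

lemma is_graph_split_edges: "is_graph (discrete_topology (insert n VA)) (split_edges EA a b c n)"
  unfolding is_graph_def topspace_discrete_topology
proof (intro conjI ballI allI impI split_edges_subset)
  fix x
  assume "x \<in> insert n VA"
  then have "split_map b n x \<in> VA"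
    using abc_in by (auto simp: split_map_def)
  then show "(x, x) \<in> split_edges EA a b c n"
    using EA_refl distinct abc_in fresh by (auto simp: split_edges_def)
next
  fix x y
  assume "(x, y) \<in> split_edges EA a b c n"
  then show "(y, x) \<in> split_edges EA a b c n"
    using EA_sym by (auto simp: split_edges_def)
qed

lemma split_map_epimorphism:
  "epimorphism (discrete_topology (insert n VA)) (split_edges EA a b c n)
     (discrete_topology VA) EA (split_map b n)"
  unfolding epimorphism_def
proof (intro conjI allI impI)
  show "continuous_map (discrete_topology (insert n VA)) (discrete_topology VA) (split_map b n)"
    using abc_in by (auto simp: split_map_def)
  show "(split_map b n u, split_map b n v) \<in> EA" if "(u, v) \<in> split_edges EA a b c n" for u v
    using that by (simp add: split_edges_def)
  show "split_map b n ` topspace (discrete_topology (insert n VA)) = topspace (discrete_topology VA)"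
    using abc_in fresh by (force simp: split_map_def)
  have "(p, q) \<in> (\<lambda>(u, v). (split_map b n u, split_map b n v)) ` split_edges EA a b c n"
    if "(p, q) \<in> EA" for p q
  proof -
    have "p \<noteq> n" "q \<noteq> n"
      using that EA_sub fresh by auto
    then consider "(p, q) = (b, c)" | "(p, q) = (c, b)" | "(p, q) \<notin> {(b, c), (c, b), (n, a), (a, n)}"
      by auto
    then show ?thesis
    proof cases
      case 1
      then have "(n, c) \<in> split_edges EA a b c n"
        using that distinct fresh abc_in by (auto simp: split_edges_def split_map_def)
      then show ?thesis
        using 1 distinct abc_in fresh by (force simp: split_map_def)
    next
      case 2
      then have "(c, n) \<in> split_edges EA a b c n"
        using that distinct fresh abc_in by (auto simp: split_edges_def split_map_def)
      then show ?thesis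
        using 2 distinct abc_in fresh by (force simp: split_map_def)
    next
      case 3
      then have "(p, q) \<in> split_edges EA a b c n"
        using that \<open>p \<noteq> n\<close> \<open>q \<noteq> n\<close> by (simp add: split_edges_def split_map_def)
      then show ?thesis
        using \<open>p \<noteq> n\<close> \<open>q \<noteq> n\<close> by (force simp: split_map_def)
    qed
  qed
  then show "(\<lambda>(u, v). (split_map b n u, split_map b n v)) ` split_edges EA a b c n = EA"
    by (auto simp: split_edges_def)
qed

lemma split_map_fibres_connected:
  assumes "x \<in> VA"
  shows "gr_connected (discrete_topology (insert n VA)) (split_edges EA a b c n)
           {u \<in> insert n VA. split_map b n u = x}"
proof (rule gr_connected_discrete_clique)
  fix u v
  assume "u \<in> {u \<in> insert n VA. split_map b n u = x}" "v \<in> {u \<in> insert n VA. split_map b n u = x}"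
  then show "(u, v) \<in> split_edges EA a b c n"
    using assms EA_refl distinct fresh abc_in
    by (auto simp: split_edges_def split_map_def split: if_splits)
qed auto

lemma split_edges_no_path:
  assumes "(u, v) \<in> split_edges EA a b c n" "(v, w) \<in> split_edges EA a b c n"
    and "split_map b n u = a" "split_map b n v = b" "split_map b n w = c"
  shows False
proof -
  have "u = a" "w = c" "v = b \<or> v = n"
    using assms(3-5) distinct by (auto simp: split_map_def split: if_splits)
  then show False
    using assms(1,2) by (auto simp: split_edges_def)
qed

end

lemma fin_conn_graph_split:
  assumes A: "fin_conn_graph VA EA" and "(a, b) \<in> EA" "(b, c) \<in> EA"
    and "a \<noteq> b" "b \<noteq> c" "a \<noteq> c" and "n \<notin> VA"
  shows "fin_conn_graph (insert n VA) (split_edges EA a b c n)"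
    and "confluent_epi (discrete_topology (insert n VA)) (split_edges EA a b c n)
           (discrete_topology VA) EA (split_map b n)"
proof -
  have graph: "is_graph (discrete_topology VA) EA" and conn: "gr_connected (discrete_topology VA) EA VA"
    using A unfolding fin_conn_graph_def by auto
  note split = split_map_epimorphism[OF graph assms(2-7)] split_edges_subset[OF graph assms(2-7)]
    split_map_fibres_connected[OF graph assms(2-7)]
  have preimage_connected: "gr_connected (discrete_topology (insert n VA)) (split_edges EA a b c n)
      {u \<in> insert n VA. split_map b n u \<in> Q}"
    if "gr_connected (discrete_topology VA) EA Q" for Q
    using discrete_epi_preimage_connected[OF split that] .
  have "{u \<in> insert n VA. split_map b n u \<in> VA} = insert n VA"
    using \<open>(a, b) \<in> EA\<close> graph unfolding is_graph_def by (auto simp: split_map_def)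
  then show "fin_conn_graph (insert n VA) (split_edges EA a b c n)"
    using A preimage_connected[OF conn] is_graph_split_edges[OF graph assms(2-7)]
    unfolding fin_conn_graph_def by auto
  show "confluent_epi (discrete_topology (insert n VA)) (split_edges EA a b c n)
           (discrete_topology VA) EA (split_map b n)"
    using confluent_epi_if_preimages_connected[OF split(1)] preimage_connected by simp
qed

lemma fin_conn_graph_unlift_path:
  assumes A: "fin_conn_graph VA EA" and "(a, b) \<in> EA" "(b, c) \<in> EA"
    and "a \<noteq> b" "b \<noteq> c" "a \<noteq> c"
  obtains VB EB g where "fin_conn_graph VB EB"
    and "confluent_epi (discrete_topology VB) EB (discrete_topology VA) EA g"
    and "\<And>u v w. (u, v) \<in> EB \<Longrightarrow> (v, w) \<in> EB \<Longrightarrow> g u = a \<Longrightarrow> g v = b \<Longrightarrow> g w \<noteq> c"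
proof
  define n where "n = Suc (Max VA)"
  have "finite VA" and graph: "is_graph (discrete_topology VA) EA"
    using A unfolding fin_conn_graph_def by auto
  then have "n \<notin> VA"
    unfolding n_def using Max_ge not_less_eq_eq by blast
  then show "fin_conn_graph (insert n VA) (split_edges EA a b c n)"
    and "confluent_epi (discrete_topology (insert n VA)) (split_edges EA a b c n)
           (discrete_topology VA) EA (split_map b n)"
    using fin_conn_graph_split[OF assms] by auto
  show "split_map b n w \<noteq> c"
    if "(u, v) \<in> split_edges EA a b c n" "(v, w) \<in> split_edges EA a b c n"
      "split_map b n u = a" "split_map b n v = b" for u v w
    using split_edges_no_path[OF graph assms(2-6) \<open>n \<notin> VA\<close> that] by blast
qed

section \<open>Compact zero-dimensional metric spaces\<close>

lemma compact_Image:
  fixes E :: "('a::metric_space \<times> 'a) set"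
  assumes "compact E" and "closed B"
  shows "compact (E `` B)"
proof -
  have "E `` B = snd ` (E \<inter> (B \<times> UNIV))"
    by force
  moreover have "compact (E \<inter> (B \<times> UNIV))"
    using assms by (intro compact_Int_closed closed_Times) auto
  moreover have "continuous_on (E \<inter> (B \<times> UNIV)) snd"
    by (intro continuous_intros)
  ultimately show ?thesis
    using compact_continuous_image by metis
qed

lemma closedin_Int_Image:
  fixes V :: "'a::metric_space set"
  assumes "compact V" "compact E" "closedin (top_of_set V) A" "closedin (top_of_set V) B"
  shows "closedin (top_of_set V) (A \<inter> E `` B)"
proof -
  have "closed (E `` B)"
    using closedin_compact[OF assms(1,4)] assms(2) by (simp add: compact_Image compact_imp_closed)
  then have "closedin (top_of_set V) (A \<inter> (V \<inter> E `` B))"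
    using assms(3) by (intro closedin_Int closedin_closed_Int)
  moreover have "A \<inter> (V \<inter> E `` B) = A \<inter> E `` B"
    using closedin_subset[OF assms(3)] by auto
  ultimately show ?thesis
    by simp
qed

lemma zero_dimensional_separate_clopen:
  assumes "compact_space X" and "zero_dimensional X"
    and "closedin X A" and "closedin X B" and "A \<inter> B = {}"
  obtains C where "openin X C" "closedin X C" "A \<subseteq> C" "C \<inter> B = {}"
proof -
  have "\<exists>C. openin X C \<and> closedin X C \<and> x \<in> C \<and> C \<subseteq> topspace X - B" if "x \<in> A" for x
  proof -
    have "x \<in> topspace X - B" "openin X (topspace X - B)"
      using assms(3-5) that closedin_subset[OF assms(3)] by auto
    then show ?thesis
      using assms(2) unfolding zero_dimensional_def by blast
  qed
  then obtain C where C: "\<And>x. x \<in> A \<Longrightarrow> openin X (C x) \<and> closedin X (C x) \<and> x \<in> C x \<and> C x \<subseteq> topspace X - B"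
    by metis
  obtain \<F> where \<F>: "finite \<F>" "\<F> \<subseteq> C ` A" "A \<subseteq> \<Union>\<F>"
  proof -
    have "compactin X A" "\<forall>U \<in> C ` A. openin X U" "A \<subseteq> \<Union>(C ` A)"
      using closedin_compact_space[OF assms(1,3)] C by auto
    then show ?thesis
      using that unfolding compactin_def by meson
  qed
  show thesis
  proof
    show "openin X (\<Union>\<F>)" "closedin X (\<Union>\<F>)"
      using \<F>(1,2) C by (auto intro!: openin_Union closedin_Union)
  qed (use \<F> C in auto)
qed

lemma zero_dimensional_disjoint_clopens:
  assumes "compact_space X" and "zero_dimensional X" and "finite I"
    and closed: "\<And>i. i \<in> I \<Longrightarrow> closedin X (Y i)"
    and disjoint: "\<And>i j. i \<in> I \<Longrightarrow> j \<in> I \<Longrightarrow> i \<noteq> j \<Longrightarrow> Y i \<inter> Y j = {}"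
  shows "\<exists>K. \<forall>i\<in>I. openin X (K i) \<and> closedin X (K i) \<and> Y i \<subseteq> K i \<and>
           (\<forall>j\<in>I. i \<noteq> j \<longrightarrow> K i \<inter> K j = {})"
proof -
  have "\<exists>C. openin X C \<and> closedin X C \<and> Y i \<subseteq> C \<and> C \<inter> (\<Union>j\<in>I - {i}. Y j) = {}" if "i \<in> I" for i
  proof -
    have "closedin X (\<Union>j\<in>I - {i}. Y j)" "Y i \<inter> (\<Union>j\<in>I - {i}. Y j) = {}"
      using disjoint[OF that] assms(3) closed by (auto intro!: closedin_Union)
    then show ?thesis
      using zero_dimensional_separate_clopen[OF assms(1,2) closed[OF that]] by metis
  qed
  then obtain C where C: "\<And>i. i \<in> I \<Longrightarrow>
      openin X (C i) \<and> closedin X (C i) \<and> Y i \<subseteq> C i \<and> C i \<inter> (\<Union>j\<in>I - {i}. Y j) = {}"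
    by metis
  have "openin X (C i - (\<Union>j\<in>I - {i}. C j)) \<and> closedin X (C i - (\<Union>j\<in>I - {i}. C j)) \<and>
        Y i \<subseteq> C i - (\<Union>j\<in>I - {i}. C j)" if "i \<in> I" for i
  proof -
    have "openin X (\<Union>j\<in>I - {i}. C j)" "closedin X (\<Union>j\<in>I - {i}. C j)"
      using C assms(3) by (auto intro!: openin_Union closedin_Union)
    moreover have "Y i \<inter> C j = {}" if "j \<in> I - {i}" for j
      using C[of j] \<open>i \<in> I\<close> that by blast
    ultimately show ?thesis
      using C[OF \<open>i \<in> I\<close>] by (auto intro!: openin_diff closedin_diff)
  qed
  then show ?thesis
    by (intro exI[of _ "\<lambda>i. C i - (\<Union>j\<in>I - {i}. C j)"]) blast
qed

section \<open>The topological realization\<close>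

lemma openin_realization:
  "openin (realization X E) U \<longleftrightarrow> U \<subseteq> topspace X // E \<and> openin X {x \<in> topspace X. E `` {x} \<in> U}"
  unfolding realization_def using istopology_realization[of X E] by simp

lemma topspace_realization: "topspace (realization X E) = topspace X // E"
proof
  show "topspace (realization X E) \<subseteq> topspace X // E"
    using openin_topspace[of "realization X E"] unfolding openin_realization by blast
  have "{x \<in> topspace X. E `` {x} \<in> topspace X // E} = topspace X"
    by (auto intro: quotientI)
  then show "topspace X // E \<subseteq> topspace (realization X E)"
    using openin_subset[of "realization X E"] unfolding openin_realization by simp
qed

lemma closedin_realization_singleton:
  assumes "equiv (topspace X) E" and "c \<in> topspace X // E" and "closedin X c"
  shows "closedin (realization X E) {c}"
proof -
  obtain y where y: "y \<in> topspace X" "c = E `` {y}"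
    using assms(2) by (rule quotientE)
  have "E `` {x} = c \<longleftrightarrow> x \<in> c" if "x \<in> topspace X" for x
    using equiv_class_eq_iff[OF assms(1), of x y] equiv_class_eq_iff[OF assms(1), of y x] that y
    by auto
  then have "{x \<in> topspace X. E `` {x} \<in> topspace X // E - {c}} = topspace X - c"
    by (auto intro: quotientI)
  then show ?thesis
    using assms(2,3) unfolding closedin_def openin_realization topspace_realization by auto
qed

lemma connected_space_realization:
  assumes equiv: "equiv (topspace X) E" and conn: "gr_connected X E (topspace X)"
  shows "connected_space (realization X E)"
  unfolding connected_space_clopen_in
proof (intro allI impI)
  fix T
  assume T: "openin (realization X E) T \<and> closedin (realization X E) T"
  define P where "P = {x \<in> topspace X. E `` {x} \<in> T}"
  define Q where "Q = {x \<in> topspace X. E `` {x} \<in> topspace X // E - T}"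
  have "openin X P" "openin X Q"
    using T unfolding P_def Q_def closedin_def openin_realization topspace_realization by auto
  moreover have PQ: "P \<union> Q = topspace X" "P \<inter> Q = {}"
    unfolding P_def Q_def by (auto intro: quotientI)
  moreover have "topspace X - P = Q" "topspace X - Q = P"
    using PQ by blast+
  ultimately have "closedin X P" "closedin X Q"
    unfolding closedin_def using PQ(1) by auto
  moreover have "(p, q) \<notin> E" if "p \<in> P" "q \<in> Q" for p q
  proof
    assume "(p, q) \<in> E"
    then have "E `` {p} = E `` {q}"
      by (rule equiv_class_eq[OF equiv])
    then show False
      using that unfolding P_def Q_def by simp
  qed
  ultimately have "P = {} \<or> Q = {}"
    using conn PQ unfolding gr_connected_def gr_disconnected_def subtopology_topspace by blast
  moreover have "T \<subseteq> topspace X // E"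
    using T unfolding openin_realization by blast
  ultimately show "T = {} \<or> T = topspace (realization X E)"
    unfolding P_def Q_def topspace_realization by (auto elim!: quotientE simp: quotientI)
qed

lemma openin_realization_classes_within:
  fixes V :: "'a::metric_space set"
  assumes "compact V" "compact E" "equiv V E" and S: "openin (top_of_set V) S"
  shows "openin (realization (top_of_set V) E) {c \<in> V // E. c \<subseteq> S}"
proof -
  have "E `` {x} \<subseteq> S \<longleftrightarrow> x \<notin> E `` (V - S)" if "x \<in> V" for x
    using assms(3) that unfolding equiv_def refl_on_def sym_def by blast
  then have "{x \<in> V. E `` {x} \<in> {c \<in> V // E. c \<subseteq> S}} = V - E `` (V - S)"
    by (auto intro: quotientI)
  moreover obtain T where "open T" "S = V \<inter> T"
    using S by (auto simp: openin_open)
  then have "V - S = V - T" "compact (V - T)"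
    using assms(1) by (auto intro: compact_diff)
  then have "closed (E `` (V - S))"
    by (simp add: compact_Image[OF assms(2) compact_imp_closed] compact_imp_closed)
  ultimately show ?thesis
    unfolding openin_realization by (simp add: Diff_eq openin_open_Int open_Compl)
qed

lemma closedin_realization_class:
  fixes V :: "'a::metric_space set"
  assumes "compact E" "equiv V E" "x \<in> V"
  shows "closedin (realization (top_of_set V) E) {E `` {x}}"
proof -
  have "closed (E `` {x})"
    using assms(1) by (simp add: compact_Image compact_imp_closed)
  moreover have "E `` {x} \<subseteq> V"
    using assms(2) unfolding equiv_def refl_on_def by auto
  ultimately have "closedin (top_of_set V) (E `` {x})"
    by (simp add: closed_subset)
  then show ?thesis
    using closedin_realization_singleton[of "top_of_set V" E] assms(2,3) by (simp add: quotientI)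
qed

section \<open>Covering dimension\<close>

definition disjoint_open_refinement :: "'a topology \<Rightarrow> 'a set set \<Rightarrow> 'a set set \<Rightarrow> bool" where
  "disjoint_open_refinement X \<U> \<W> \<longleftrightarrow>
     finite \<W> \<and> disjoint \<W> \<and> (\<forall>W\<in>\<W>. openin X W \<and> (\<exists>U\<in>\<U>. W \<subseteq> U))"

lemma covering_dim_le_if_disjoint_refinements:
  assumes "\<And>\<U>. finite \<U> \<Longrightarrow> (\<forall>U\<in>\<U>. openin X U) \<Longrightarrow> \<Union>\<U> = topspace X \<Longrightarrow>
    \<exists>\<V>. (\<forall>i\<le>n. disjoint_open_refinement X \<U> (\<V> i)) \<and> (\<Union>i\<le>n. \<Union>(\<V> i)) = topspace X"
  shows "covering_dim_le X n"
  unfolding covering_dim_le_def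
proof (intro allI impI)
  fix \<U>
  assume "finite \<U> \<and> (\<forall>U\<in>\<U>. openin X U) \<and> \<Union>\<U> = topspace X"
  then obtain \<V> where \<V>: "\<And>i. i \<le> n \<Longrightarrow> finite (\<V> i) \<and> disjoint (\<V> i) \<and>
      (\<forall>W\<in>\<V> i. openin X W \<and> (\<exists>U\<in>\<U>. W \<subseteq> U))" and cover: "(\<Union>i\<le>n. \<Union>(\<V> i)) = topspace X"
    using assms unfolding disjoint_open_refinement_def by metis
  have "card {W \<in> (\<Union>i\<le>n. \<V> i). x \<in> W} \<le> n + 1" for x
  proof -
    have "card {W \<in> \<V> i. x \<in> W} \<le> 1" if "i \<le> n" for i
      using \<V>[OF that] unfolding disjoint_def
      by (auto simp: card_le_Suc0_iff_eq disjnt_iff)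
    then have "(\<Sum>i\<le>n. card {W \<in> \<V> i. x \<in> W}) \<le> (\<Sum>i\<le>n. 1)"
      by (intro sum_mono) auto
    moreover have "{W \<in> (\<Union>i\<le>n. \<V> i). x \<in> W} = (\<Union>i\<le>n. {W \<in> \<V> i. x \<in> W})"
      by auto
    ultimately show ?thesis
      using card_UN_le[of "{..n}" "\<lambda>i. {W \<in> \<V> i. x \<in> W}"] by simp
  qed
  moreover have "\<Union>(\<Union>i\<le>n. \<V> i) = topspace X"
    using cover by blast
  ultimately show "\<exists>\<W>. finite \<W> \<and> (\<forall>W\<in>\<W>. openin X W) \<and> \<Union>\<W> = topspace X \<and>
      (\<forall>W\<in>\<W>. \<exists>U\<in>\<U>. W \<subseteq> U) \<and> (\<forall>x\<in>topspace X. card {W \<in> \<W>. x \<in> W} \<le> n + 1)"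
    using \<V> by (intro exI[of _ "\<Union>i\<le>n. \<V> i"] conjI) auto
qed

lemma not_covering_dim_le_0_if_connected:
  assumes "connected_space X" and "closedin X {x}" "closedin X {y}" "x \<noteq> y"
  shows "\<not> covering_dim_le X 0"
proof
  assume dim0: "covering_dim_le X 0"
  define \<U> where "\<U> = {topspace X - {x}, topspace X - {y}}"
  have cover: "finite \<U> \<and> (\<forall>U\<in>\<U>. openin X U) \<and> \<Union>\<U> = topspace X"
    using assms(2-4) unfolding \<U>_def by auto
  obtain \<V> where \<V>: "finite \<V>" "\<forall>W\<in>\<V>. openin X W" "\<Union>\<V> = topspace X"
    and refines: "\<forall>W\<in>\<V>. \<exists>U\<in>\<U>. W \<subseteq> U"
    and order: "\<forall>z\<in>topspace X. card {W \<in> \<V>. z \<in> W} \<le> 0 + 1"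
    using dim0[unfolded covering_dim_le_def, rule_format, OF cover] by (elim exE conjE)
  have xy: "x \<in> topspace X" "y \<in> topspace X"
    using assms(2,3) closedin_subset by auto
  then obtain W where W: "W \<in> \<V>" "x \<in> W"
    using \<V>(3) by auto
  have unique: "W' = W" if "W' \<in> \<V>" "z \<in> W'" "z \<in> W" for W' z
  proof -
    have "z \<in> topspace X"
      using that \<V>(2) openin_subset by blast
    then have "card {W \<in> \<V>. z \<in> W} \<le> Suc 0"
      using order by simp
    moreover have "finite {W \<in> \<V>. z \<in> W}"
      using \<V>(1) by simp
    ultimately show ?thesis
      using W(1) that by (auto simp: card_le_Suc0_iff_eq)
  qed
  have "topspace X - W = \<Union>(\<V> - {W})"
  proof
    show "topspace X - W \<subseteq> \<Union>(\<V> - {W})"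
      using \<V>(3) by blast
    show "\<Union>(\<V> - {W}) \<subseteq> topspace X - W"
    proof
      fix z
      assume "z \<in> \<Union>(\<V> - {W})"
      then obtain W' where "W' \<in> \<V>" "W' \<noteq> W" "z \<in> W'"
        by blast
      then show "z \<in> topspace X - W"
        using unique \<V>(3) by blast
    qed
  qed
  moreover have "openin X (\<Union>(\<V> - {W}))"
    using \<V>(2) by (intro openin_Union) blast
  ultimately have "closedin X W"
    using \<V>(2) W(1) openin_subset unfolding closedin_def by metis
  then have "W = {} \<or> W = topspace X"
    using assms(1) \<V>(2) W(1) unfolding connected_space_clopen_in by blast
  moreover have "y \<notin> W"
    using refines W unfolding \<U>_def by blast
  ultimately show False
    using W(2) xy by blast
qed

section \<open>Realizations with classes of at most two points\<close>

definition classes_within :: "'a set \<Rightarrow> ('a \<times> 'a) set \<Rightarrow> 'a set \<Rightarrow> 'a set set" where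
  "classes_within V E S = {c \<in> V // E. c \<subseteq> S}"

lemma classes_within_disjoint:
  assumes "equiv V E" and "S \<inter> T = {}"
  shows "classes_within V E S \<inter> classes_within V E T = {}"
  using assms by (auto simp: classes_within_def elim!: quotientE dest: equiv_class_self)

lemma classes_within_subset:
  assumes "equiv V E" and "\<And>z. z \<in> S \<Longrightarrow> z \<in> V \<Longrightarrow> E `` {z} \<in> U"
  shows "classes_within V E S \<subseteq> U"
  using assms by (auto simp: classes_within_def elim!: quotientE dest: equiv_class_self)

lemma realization_cover_lebesgue_number:
  fixes V :: "'a::metric_space set"
  assumes "compact E" "equiv V E"
    and open_cover: "\<forall>U\<in>\<U>. openin (realization (top_of_set V) E) U" "\<Union>\<U> = V // E"
  obtains e where "e > 0"
    and "\<And>x y. (x, y) \<in> E \<Longrightarrow> \<exists>U\<in>\<U>. \<forall>z\<in>V. dist z x < e \<or> dist z y < e \<longrightarrow> E `` {z} \<in> U"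
proof -
  have "\<forall>U\<in>\<U>. \<exists>T. open T \<and> {x \<in> V. E `` {x} \<in> U} = V \<inter> T"
    using open_cover(1) unfolding openin_realization by (simp add: openin_open)
  from bchoice[OF this] obtain Op
    where Op: "\<forall>U\<in>\<U>. open (Op U) \<and> {x \<in> V. E `` {x} \<in> U} = V \<inter> Op U" ..
  have cover: "E \<subseteq> \<Union>((\<lambda>U. Op U \<times> Op U) ` \<U>)"
  proof clarify
    fix x y
    assume "(x, y) \<in> E"
    then have xy: "x \<in> V" "y \<in> V"
      using assms(2) by (auto simp: equiv_def refl_on_def)
    have "E `` {x} \<in> \<Union>\<U>"
      using xy open_cover(2) by (simp add: quotientI)
    then obtain U where "U \<in> \<U>" "E `` {x} \<in> U" "E `` {y} \<in> U"
      using equiv_class_eq[OF assms(2) \<open>(x, y) \<in> E\<close>] by auto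
    then have "x \<in> V \<inter> Op U" "y \<in> V \<inter> Op U"
      using Op xy by blast+
    then show "(x, y) \<in> (\<Union>U\<in>\<U>. Op U \<times> Op U)"
      using \<open>U \<in> \<U>\<close> by blast
  qed
  have "open G" if "G \<in> (\<lambda>U. Op U \<times> Op U) ` \<U>" for G
    using that Op by (auto intro: open_Times)
  then obtain e where "e > 0" and e: "\<And>p. p \<in> E \<Longrightarrow> \<exists>G \<in> (\<lambda>U. Op U \<times> Op U) ` \<U>. ball p e \<subseteq> G"
    using Heine_Borel_lemma[OF assms(1) cover] by blast
  show thesis
  proof (rule that[OF \<open>e > 0\<close>])
    fix x y
    assume "(x, y) \<in> E"
    then obtain U where "U \<in> \<U>" and U: "ball (x, y) e \<subseteq> Op U \<times> Op U"
      using e by blast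
    have "z \<in> Op U" if "dist z x < e \<or> dist z y < e" for z
    proof -
      have "dist (x, y) (z, y) = dist z x" "dist (x, y) (x, z) = dist z y"
        by (simp_all add: dist_Pair_Pair dist_commute)
      then have "(z, y) \<in> ball (x, y) e \<or> (x, z) \<in> ball (x, y) e"
        using that by auto
      then show ?thesis
        using U by blast
    qed
    moreover have "E `` {z} \<in> U" if "z \<in> V" "z \<in> Op U" for z
      using that Op \<open>U \<in> \<U>\<close> by blast
    ultimately show "\<exists>U\<in>\<U>. \<forall>z\<in>V. dist z x < e \<or> dist z y < e \<longrightarrow> E `` {z} \<in> U"
      using \<open>U \<in> \<U>\<close> by blast
  qed
qed

lemma disjoint_classes_within:
  assumes "equiv V E" and "\<And>i j. i \<in> I \<Longrightarrow> j \<in> I \<Longrightarrow> S i \<noteq> S j \<Longrightarrow> S i \<inter> S j = {}"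
  shows "disjoint ((\<lambda>i. classes_within V E (S i)) ` I)"
proof (rule pairwise_imageI)
  fix i j
  assume "i \<in> I" "j \<in> I" "classes_within V E (S i) \<noteq> classes_within V E (S j)"
  then have "S i \<inter> S j = {}"
    using assms(2) by metis
  then show "disjnt (classes_within V E (S i)) (classes_within V E (S j))"
    using classes_within_disjoint[OF assms(1)] by (simp add: disjnt_def)
qed

lemma continuous_map_discrete_fibre:
  assumes "continuous_map X (discrete_topology U) f"
  shows "openin X {x \<in> topspace X. f x = a}" and "closedin X {x \<in> topspace X. f x = a}"
proof -
  have fibre: "{x \<in> topspace X. f x = a} = {x \<in> topspace X. f x \<in> {a} \<inter> U}"
    using continuous_map_image_subset_topspace[OF assms] by auto
  show "openin X {x \<in> topspace X. f x = a}"
    unfolding fibre by (rule openin_continuous_map_preimage[OF assms]) simp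
  show "closedin X {x \<in> topspace X. f x = a}"
    unfolding fibre by (rule closedin_continuous_map_preimage[OF assms]) simp
qed

text \<open>K a b is a clopen neighbourhood, inside the fibre over a, of the points joined to the
  fibre over b; these can be chosen disjoint for distinct pairs because each point has at most
  one neighbour.\<close>
lemma fibre_boundary_clopens:
  fixes V :: "'a::metric_space set" and f :: "'a \<Rightarrow> 'b"
  assumes "compact V" "compact E" "equiv V E" "zero_dimensional (top_of_set V)"
    and f: "finite (f ` V)" "continuous_map (top_of_set V) (discrete_topology (f ` V)) f"
    and two: "\<And>x y z. (x, y) \<in> E \<Longrightarrow> (x, z) \<in> E \<Longrightarrow> y \<noteq> x \<Longrightarrow> z \<noteq> x \<Longrightarrow> y = z"
  obtains K where "\<And>a b. openin (top_of_set V) (K a b)"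
    and "\<And>a b. K a b \<subseteq> {x \<in> V. f x = a}"
    and "\<And>x y. (x, y) \<in> E \<Longrightarrow> f x \<noteq> f y \<Longrightarrow> x \<in> K (f x) (f y)"
    and "\<And>a b a' b'. (a, b) \<noteq> (a', b') \<Longrightarrow> K a b \<inter> K a' b' = {}"
proof -
  let ?X = "top_of_set V"
  define F where "F a = {x \<in> V. f x = a}" for a
  define Y where "Y = (\<lambda>(a, b). F a \<inter> E `` F b)"
  define I where "I = {(a, b) \<in> f ` V \<times> f ` V. a \<noteq> b}"
  have E: "E \<subseteq> V \<times> V" "sym E"
    using assms(3) unfolding equiv_def refl_on_def by auto
  have F: "openin ?X (F a) \<and> closedin ?X (F a)" for a
    using continuous_map_discrete_fibre[OF f(2)] unfolding F_def by simp
  have "closedin ?X (Y p)" for p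
    unfolding Y_def using F closedin_Int_Image[OF assms(1,2)] by (simp split: prod.split)
  moreover have "Y p \<inter> Y q = {}" if "p \<in> I" "q \<in> I" "p \<noteq> q" for p q
  proof (rule ccontr)
    assume "Y p \<inter> Y q \<noteq> {}"
    then obtain x y y' where "x \<in> F (fst p)" "(y, x) \<in> E" "y \<in> F (snd p)"
      "x \<in> F (fst q)" "(y', x) \<in> E" "y' \<in> F (snd q)"
      unfolding Y_def by (auto split: prod.splits)
    moreover from this have "(x, y) \<in> E" "(x, y') \<in> E"
      using E(2) unfolding sym_def by blast+
    ultimately show False
      using two[of x y y'] that unfolding I_def F_def by (auto split: prod.splits)
  qed
  moreover have "compact_space ?X"
    using assms(1) by (simp add: compact_space_def compactin_subtopology)
  moreover have "finite I"
    using f(1) finite_subset[of I "f ` V \<times> f ` V"] unfolding I_def by auto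
  ultimately obtain C where C: "\<forall>p\<in>I. openin ?X (C p) \<and> closedin ?X (C p) \<and> Y p \<subseteq> C p \<and>
      (\<forall>q\<in>I. p \<noteq> q \<longrightarrow> C p \<inter> C q = {})"
    using zero_dimensional_disjoint_clopens[OF _ assms(4), of I Y] by blast
  define K where "K a b = (if (a, b) \<in> I then C (a, b) \<inter> F a else {})" for a b
  show thesis
  proof
    show "openin ?X (K a b)" for a b
      using C F unfolding K_def by auto
    show "K a b \<subseteq> {x \<in> V. f x = a}" for a b
      unfolding K_def F_def by auto
    show "x \<in> K (f x) (f y)" if "(x, y) \<in> E" "f x \<noteq> f y" for x y
    proof -
      have "x \<in> V" "y \<in> V" "(y, x) \<in> E"
        using that E unfolding sym_def by auto
      then have "(f x, f y) \<in> I" "x \<in> Y (f x, f y)" "x \<in> F (f x)"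
        using that unfolding I_def Y_def F_def by auto
      then show ?thesis
        using C unfolding K_def by auto
    qed
    show "K a b \<inter> K a' b' = {}" if "(a, b) \<noteq> (a', b')" for a b a' b'
    proof (cases "(a, b) \<in> I \<and> (a', b') \<in> I")
      case True
      then have "C (a, b) \<inter> C (a', b') = {}"
        using C that by blast
      then show ?thesis
        unfolding K_def by auto
    qed (auto simp: K_def)
  qed
qed

lemma class_within_fibre_or_bridge:
  assumes "equiv V E" and "c \<in> V // E"
    and two: "\<And>x y z. (x, y) \<in> E \<Longrightarrow> (x, z) \<in> E \<Longrightarrow> y \<noteq> x \<Longrightarrow> z \<noteq> x \<Longrightarrow> y = z"
    and K_edge: "\<And>x y. (x, y) \<in> E \<Longrightarrow> f x \<noteq> f y \<Longrightarrow> x \<in> K (f x) (f y)"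
  obtains x where "x \<in> V" "c \<in> classes_within V E {z \<in> V. f z = f x}"
  | x y where "(x, y) \<in> E" "f x \<noteq> f y" "c \<in> classes_within V E (K (f x) (f y) \<union> K (f y) (f x))"
proof -
  obtain x where x: "x \<in> V" "c = E `` {x}"
    using assms(2) by (rule quotientE)
  have E: "E \<subseteq> V \<times> V" "sym E"
    using assms(1) unfolding equiv_def refl_on_def by auto
  show thesis
  proof (cases "c \<subseteq> {z \<in> V. f z = f x}")
    case True
    then show thesis
      using that(1) x assms(2) unfolding classes_within_def by blast
  next
    case False
    then obtain y where "y \<in> c" "y \<notin> {z \<in> V. f z = f x}"
      by blast
    then have "(x, y) \<in> E" "f x \<noteq> f y"
      using x E(1) by auto
    moreover have "c \<subseteq> {x, y}"
      using two[OF \<open>(x, y) \<in> E\<close>] \<open>f x \<noteq> f y\<close> x by auto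
    moreover have "x \<in> K (f x) (f y)" "y \<in> K (f y) (f x)"
      using K_edge \<open>(x, y) \<in> E\<close> \<open>f x \<noteq> f y\<close> E(2) unfolding sym_def by auto
    ultimately show thesis
      using that(2) assms(2) unfolding classes_within_def by blast
  qed
qed

lemma realization_cover_fine_map:
  fixes V :: "'a::metric_space set"
  assumes "compact E" "equiv V E"
    and open_cover: "\<forall>U\<in>\<U>. openin (realization (top_of_set V) E) U" "\<Union>\<U> = V // E"
    and fine: "\<forall>e>0. \<exists>f :: 'a \<Rightarrow> nat. finite (f ` V) \<and>
      continuous_map (top_of_set V) (discrete_topology (f ` V)) f \<and>
      (\<forall>x\<in>V. \<forall>y\<in>V. f x = f y \<longrightarrow> dist x y < e)"
  obtains f :: "'a \<Rightarrow> nat" where "finite (f ` V)"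
    and "continuous_map (top_of_set V) (discrete_topology (f ` V)) f"
    and "\<And>x y. (x, y) \<in> E \<Longrightarrow> \<exists>U\<in>\<U>. \<forall>z\<in>V. f z = f x \<or> f z = f y \<longrightarrow> E `` {z} \<in> U"
proof -
  obtain e where "e > 0"
    and e: "\<And>x y. (x, y) \<in> E \<Longrightarrow> \<exists>U\<in>\<U>. \<forall>z\<in>V. dist z x < e \<or> dist z y < e \<longrightarrow> E `` {z} \<in> U"
    using realization_cover_lebesgue_number[OF assms(1,2) open_cover] by blast
  then obtain f :: "'a \<Rightarrow> nat" where f: "finite (f ` V)"
      "continuous_map (top_of_set V) (discrete_topology (f ` V)) f"
    and small: "\<And>x y. x \<in> V \<Longrightarrow> y \<in> V \<Longrightarrow> f x = f y \<Longrightarrow> dist x y < e"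
    using fine by meson
  have "\<exists>U\<in>\<U>. \<forall>z\<in>V. f z = f x \<or> f z = f y \<longrightarrow> E `` {z} \<in> U" if "(x, y) \<in> E" for x y
  proof -
    have "x \<in> V" "y \<in> V"
      using that assms(2) unfolding equiv_def refl_on_def by auto
    then show ?thesis
      using e[OF that] small by metis
  qed
  then show thesis
    using that f by blast
qed

lemma union_swap_disjoint:
  assumes "\<And>a b a' b'. (a, b) \<noteq> (a', b') \<Longrightarrow> K a b \<inter> K a' b' = {}"
    and "K a b \<union> K b a \<noteq> K a' b' \<union> K b' a'"
  shows "(K a b \<union> K b a) \<inter> (K a' b' \<union> K b' a') = {}"
proof -
  have "(a, b) \<noteq> (a', b')" "(a, b) \<noteq> (b', a')" "(b, a) \<noteq> (a', b')" "(b, a) \<noteq> (b', a')"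
    using assms(2) by (auto simp: Un_commute)
  then show ?thesis
    using assms(1) by blast
qed

lemma fibre_classes_refinement:
  fixes V :: "'a::metric_space set" and f :: "'a \<Rightarrow> 'b"
  assumes "compact V" "compact E" "equiv V E" "finite (f ` V)"
    and f: "continuous_map (top_of_set V) (discrete_topology (f ` V)) f"
    and f_edge: "\<And>x y. (x, y) \<in> E \<Longrightarrow> \<exists>U\<in>\<U>. \<forall>z\<in>V. f z = f x \<or> f z = f y \<longrightarrow> E `` {z} \<in> U"
  shows "disjoint_open_refinement (realization (top_of_set V) E) \<U>
    ((\<lambda>a. classes_within V E {x \<in> V. f x = a}) ` f ` V)"
proof -
  have "disjoint ((\<lambda>a. classes_within V E {x \<in> V. f x = a}) ` f ` V)"
    by (rule disjoint_classes_within[OF assms(3)]) auto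
  moreover have "openin (realization (top_of_set V) E) (classes_within V E {x \<in> V. f x = a})" for a
    using openin_realization_classes_within[OF assms(1-3)] continuous_map_discrete_fibre(1)[OF f]
    unfolding classes_within_def by simp
  moreover have "\<exists>U\<in>\<U>. W \<subseteq> U" if W: "W \<in> (\<lambda>a. classes_within V E {x \<in> V. f x = a}) ` f ` V" for W
  proof -
    obtain z where z: "z \<in> V" "W = classes_within V E {x \<in> V. f x = f z}"
      using W by blast
    then have "(z, z) \<in> E"
      using assms(3) unfolding equiv_def refl_on_def by blast
    then obtain U where "U \<in> \<U>" and U: "\<forall>x\<in>V. f x = f z \<or> f x = f z \<longrightarrow> E `` {x} \<in> U"
      using f_edge by blast
    have "W \<subseteq> U"
      unfolding z(2) by (rule classes_within_subset[OF assms(3)]) (use U in auto)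
    then show ?thesis
      using \<open>U \<in> \<U>\<close> by blast
  qed
  ultimately show ?thesis
    unfolding disjoint_open_refinement_def using assms(4) by blast
qed

lemma bridge_classes_refinement:
  fixes V :: "'a::metric_space set" and f :: "'a \<Rightarrow> 'b"
  assumes "compact V" "compact E" "equiv V E" "finite (f ` V)"
    and f_edge: "\<And>x y. (x, y) \<in> E \<Longrightarrow> \<exists>U\<in>\<U>. \<forall>z\<in>V. f z = f x \<or> f z = f y \<longrightarrow> E `` {z} \<in> U"
    and K_open: "\<And>a b. openin (top_of_set V) (K a b)"
    and K_fibre: "\<And>a b. K a b \<subseteq> {x \<in> V. f x = a}"
    and K_disjoint: "\<And>a b a' b'. (a, b) \<noteq> (a', b') \<Longrightarrow> K a b \<inter> K a' b' = {}"
  shows "disjoint_open_refinement (realization (top_of_set V) E) \<U>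
    ((\<lambda>(a, b). classes_within V E (K a b \<union> K b a)) ` {(f x, f y) | x y. (x, y) \<in> E \<and> f x \<noteq> f y})"
proof -
  let ?P = "{(f x, f y) | x y. (x, y) \<in> E \<and> f x \<noteq> f y}"
  have "?P \<subseteq> f ` V \<times> f ` V"
    using assms(3) unfolding equiv_def refl_on_def by auto
  then have "finite ?P"
    using assms(4) by (simp add: finite_subset)
  moreover have "disjoint ((\<lambda>(a, b). classes_within V E (K a b \<union> K b a)) ` ?P)"
  proof -
    have "(\<lambda>(a, b). classes_within V E (K a b \<union> K b a)) =
        (\<lambda>p. classes_within V E ((\<lambda>(a, b). K a b \<union> K b a) p))"
      by (simp add: fun_eq_iff)
    then show ?thesis
      by (simp only:) (rule disjoint_classes_within[OF assms(3)],
        auto intro!: union_swap_disjoint[of K, OF K_disjoint])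
  qed
  moreover have "openin (realization (top_of_set V) E) W \<and> (\<exists>U\<in>\<U>. W \<subseteq> U)"
    if W: "W \<in> (\<lambda>(a, b). classes_within V E (K a b \<union> K b a)) ` ?P" for W
  proof -
    obtain p where "p \<in> ?P" "W = (\<lambda>(a, b). classes_within V E (K a b \<union> K b a)) p"
      using W by (rule imageE)
    then obtain x y where xy: "(x, y) \<in> E" "W = classes_within V E (K (f x) (f y) \<union> K (f y) (f x))"
      by auto
    have "openin (realization (top_of_set V) E) W"
      unfolding xy(2) classes_within_def
      by (rule openin_realization_classes_within[OF assms(1-3), unfolded classes_within_def])
        (intro openin_Un K_open)
    moreover obtain U where "U \<in> \<U>" and U: "\<forall>z\<in>V. f z = f x \<or> f z = f y \<longrightarrow> E `` {z} \<in> U"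
      using f_edge[OF xy(1)] by blast
    moreover have "W \<subseteq> U"
      unfolding xy(2) by (rule classes_within_subset[OF assms(3)]) (use U K_fibre in blast)
    ultimately show ?thesis
      by blast
  qed
  ultimately show ?thesis
    unfolding disjoint_open_refinement_def by blast
qed

lemma covering_dim_le_1_realization:
  fixes V :: "'a::metric_space set"
  assumes "compact V" "compact E" "equiv V E" "zero_dimensional (top_of_set V)"
    and two: "\<And>x y z. (x, y) \<in> E \<Longrightarrow> (x, z) \<in> E \<Longrightarrow> y \<noteq> x \<Longrightarrow> z \<noteq> x \<Longrightarrow> y = z"
    and fine: "\<forall>e>0. \<exists>f :: 'a \<Rightarrow> nat. finite (f ` V) \<and>
      continuous_map (top_of_set V) (discrete_topology (f ` V)) f \<and>
      (\<forall>x\<in>V. \<forall>y\<in>V. f x = f y \<longrightarrow> dist x y < e)"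
  shows "covering_dim_le (realization (top_of_set V) E) 1"
proof (rule covering_dim_le_if_disjoint_refinements)
  let ?R = "realization (top_of_set V) E"
  fix \<U>
  assume "finite \<U>" and \<U>_open: "\<forall>U\<in>\<U>. openin ?R U" and "\<Union>\<U> = topspace ?R"
  then have cover: "\<Union>\<U> = V // E"
    by (simp add: topspace_realization)
  obtain f :: "'a \<Rightarrow> nat" where f: "finite (f ` V)"
      "continuous_map (top_of_set V) (discrete_topology (f ` V)) f"
    and f_edge: "\<And>x y. (x, y) \<in> E \<Longrightarrow> \<exists>U\<in>\<U>. \<forall>z\<in>V. f z = f x \<or> f z = f y \<longrightarrow> E `` {z} \<in> U"
    using realization_cover_fine_map[OF assms(2,3) \<U>_open cover fine] by blast
  obtain K where K_open: "\<And>a b. openin (top_of_set V) (K a b)"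
    and K_fibre: "\<And>a b. K a b \<subseteq> {x \<in> V. f x = a}"
    and K_edge: "\<And>x y. (x, y) \<in> E \<Longrightarrow> f x \<noteq> f y \<Longrightarrow> x \<in> K (f x) (f y)"
    and K_disjoint: "\<And>a b a' b'. (a, b) \<noteq> (a', b') \<Longrightarrow> K a b \<inter> K a' b' = {}"
    using fibre_boundary_clopens[OF assms(1-4) f] two by blast
  define \<V> where "\<V> i = (if i = 0 then (\<lambda>a. classes_within V E {x \<in> V. f x = a}) ` f ` V
    else (\<lambda>(a, b). classes_within V E (K a b \<union> K b a)) ` {(f x, f y) | x y. (x, y) \<in> E \<and> f x \<noteq> f y})"
    for i :: nat
  have "disjoint_open_refinement ?R \<U> (\<V> i)" for i
    unfolding \<V>_def
    using fibre_classes_refinement[OF assms(1-3) f f_edge]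
      bridge_classes_refinement[OF assms(1-3) f(1) f_edge K_open K_fibre K_disjoint] by simp
  moreover have "(\<Union>i\<le>1. \<Union>(\<V> i)) = topspace ?R"
  proof
    show "(\<Union>i\<le>1. \<Union>(\<V> i)) \<subseteq> topspace ?R"
      unfolding \<V>_def classes_within_def topspace_realization by (auto split: if_splits)
    show "topspace ?R \<subseteq> (\<Union>i\<le>1. \<Union>(\<V> i))"
    proof
      fix c
      assume "c \<in> topspace ?R"
      then have "c \<in> V // E"
        by (simp add: topspace_realization)
      then consider x where "x \<in> V" "c \<in> classes_within V E {z \<in> V. f z = f x}"
        | x y where "(x, y) \<in> E" "f x \<noteq> f y" "c \<in> classes_within V E (K (f x) (f y) \<union> K (f y) (f x))"
        by (rule class_within_fibre_or_bridge[where f = f and K = K, OF assms(3) _ two K_edge])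
      then have "c \<in> \<Union>(\<V> 0) \<or> c \<in> \<Union>(\<V> 1)"
      proof cases
        case 1
        then have "c \<in> \<Union>(\<V> 0)"
          unfolding \<V>_def by auto
        then show ?thesis ..
      next
        case 2
        then have "c \<in> \<Union>(\<V> 1)"
          unfolding \<V>_def by auto
        then show ?thesis ..
      qed
      then show "c \<in> (\<Union>i\<le>1. \<Union>(\<V> i))"
        by auto
    qed
  qed
  ultimately show "\<exists>\<V>. (\<forall>i\<le>1::nat. disjoint_open_refinement ?R \<U> (\<V> i)) \<and>
      (\<Union>i\<le>1. \<Union>(\<V> i)) = topspace ?R"
    by blast
qed

section \<open>The projective Fraisse limit\<close>

lemma fin_conn_graph_triangle: "fin_conn_graph {0, 1, 2} ({0, 1, 2} \<times> {0, 1, 2 :: nat})"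
  unfolding fin_conn_graph_def is_graph_def
  by (auto intro: gr_connected_discrete_clique)

lemma fraisse_limit_G_topological:
  assumes "fraisse_limit_G V E"
  shows "compact V" "compact E" "is_graph (top_of_set V) E" "zero_dimensional (top_of_set V)"
proof -
  have tg: "topological_graph (top_of_set V) E"
    using assms unfolding fraisse_limit_G_def by blast
  then show "compact V" "is_graph (top_of_set V) E" "zero_dimensional (top_of_set V)"
    unfolding topological_graph_def by (auto simp: compact_space_def compactin_subtopology)
  have "closedin (top_of_set (V \<times> V)) E"
    using tg unfolding topological_graph_def by simp
  then show "compact E"
    using closedin_compact compact_Times \<open>compact V\<close> by blast
qed

lemma fraisse_limit_G_fine_epi:
  assumes F: "fraisse_limit_G V E" and "e > 0"
  obtains VA EA f where "fin_conn_graph VA EA"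
    and "confluent_epi (top_of_set V) E (discrete_topology VA) EA f"
    and "\<And>x y. x \<in> V \<Longrightarrow> y \<in> V \<Longrightarrow> f x = f y \<Longrightarrow> dist x y < e"
proof -
  obtain VA EA f where A: "fin_conn_graph VA EA"
    and f: "confluent_epi (top_of_set V) E (discrete_topology VA) EA f"
    and diam: "\<forall>a\<in>VA. diameter {x \<in> V. f x = a} < e"
    using F \<open>e > 0\<close> unfolding fraisse_limit_G_def by meson
  have "dist x y < e" if "x \<in> V" "y \<in> V" "f x = f y" for x y
  proof -
    have "f x \<in> VA"
      using f that(1) unfolding confluent_epi_def epimorphism_def by auto
    have "bounded {z \<in> V. f z = f x}"
      using compact_imp_bounded[OF fraisse_limit_G_topological(1)[OF F]] by (rule bounded_subset) auto
    then have "dist x y \<le> diameter {z \<in> V. f z = f x}"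
      using that by (intro diameter_bounded_bound) auto
    also have "\<dots> < e"
      using diam \<open>f x \<in> VA\<close> by blast
    finally show ?thesis .
  qed
  then show thesis
    using that A f by blast
qed

lemma fraisse_limit_G_no_path:
  assumes F: "fraisse_limit_G V E" and xy: "(x, y) \<in> E" and yz: "(y, z) \<in> E"
    and distinct: "x \<noteq> y" "y \<noteq> z" "x \<noteq> z"
  shows False
proof -
  have "x \<in> V" "y \<in> V" "z \<in> V"
    using xy yz fraisse_limit_G_topological(3)[OF F] unfolding is_graph_def by auto
  obtain VA EA f where A: "fin_conn_graph VA EA"
    and f: "confluent_epi (top_of_set V) E (discrete_topology VA) EA f"
    and small: "\<And>u w. u \<in> V \<Longrightarrow> w \<in> V \<Longrightarrow> f u = f w \<Longrightarrow> dist u w < min (dist x y) (min (dist y z) (dist x z))"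
    using fraisse_limit_G_fine_epi[OF F, of "min (dist x y) (min (dist y z) (dist x z))"] distinct
    by auto
  have "f x \<noteq> f y" "f y \<noteq> f z" "f x \<noteq> f z"
    using small[of x y] small[of y z] small[of x z] \<open>x \<in> V\<close> \<open>y \<in> V\<close> \<open>z \<in> V\<close> by force+
  moreover have "(f x, f y) \<in> EA" "(f y, f z) \<in> EA"
    using f xy yz unfolding confluent_epi_def epimorphism_def by auto
  ultimately obtain VB EB g where B: "fin_conn_graph VB EB"
    and g: "confluent_epi (discrete_topology VB) EB (discrete_topology VA) EA g"
    and unlift: "\<And>u v w. (u, v) \<in> EB \<Longrightarrow> (v, w) \<in> EB \<Longrightarrow> g u = f x \<Longrightarrow> g v = f y \<Longrightarrow> g w \<noteq> f z"
    using fin_conn_graph_unlift_path[OF A] by metis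
  obtain h where h: "confluent_epi (top_of_set V) E (discrete_topology VB) EB h"
    and fgh: "\<forall>x\<in>V. f x = g (h x)"
    using F A B f g unfolding fraisse_limit_G_def by blast
  have "(h x, h y) \<in> EB" "(h y, h z) \<in> EB"
    using h xy yz unfolding confluent_epi_def epimorphism_def by auto
  then show False
    using unlift fgh \<open>x \<in> V\<close> \<open>y \<in> V\<close> \<open>z \<in> V\<close> by metis
qed

lemma fraisse_limit_G_equiv:
  assumes F: "fraisse_limit_G V E"
  shows "equiv V E"
proof -
  have "trans E"
  proof (rule transI)
    fix x y z
    assume "(x, y) \<in> E" "(y, z) \<in> E"
    moreover have "(x, x) \<in> E"
      using \<open>(x, y) \<in> E\<close> fraisse_limit_G_topological(3)[OF F] unfolding is_graph_def by auto
    ultimately show "(x, z) \<in> E"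
      using fraisse_limit_G_no_path[OF F] by metis
  qed
  then show ?thesis
    using fraisse_limit_G_topological(3)[OF F]
    unfolding equiv_def is_graph_def refl_on_def sym_def by auto
qed

lemma fraisse_limit_G_class_two:
  assumes F: "fraisse_limit_G V E"
    and "(x, y) \<in> E" "(x, z) \<in> E" "y \<noteq> x" "z \<noteq> x"
  shows "y = z"
proof (rule ccontr)
  assume "y \<noteq> z"
  moreover have "(y, x) \<in> E"
    using assms(2) fraisse_limit_G_topological(3)[OF F] unfolding is_graph_def by auto
  ultimately show False
    using fraisse_limit_G_no_path[OF F _ assms(3)] assms(4,5) by blast
qed

lemma fraisse_limit_G_fine_maps:
  fixes V :: "'a::metric_space set"
  assumes F: "fraisse_limit_G V E"
  shows "\<forall>e>0. \<exists>f :: 'a \<Rightarrow> nat. finite (f ` V) \<and>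
    continuous_map (top_of_set V) (discrete_topology (f ` V)) f \<and>
    (\<forall>x\<in>V. \<forall>y\<in>V. f x = f y \<longrightarrow> dist x y < e)"
proof (intro allI impI)
  fix e :: real
  assume "e > 0"
  obtain VA EA f where A: "fin_conn_graph VA EA"
    and f: "confluent_epi (top_of_set V) E (discrete_topology VA) EA f"
    and small: "\<And>x y. x \<in> V \<Longrightarrow> y \<in> V \<Longrightarrow> f x = f y \<Longrightarrow> dist x y < e"
    using fraisse_limit_G_fine_epi[OF F \<open>e > 0\<close>] by blast
  have "f ` V = VA" "continuous_map (top_of_set V) (discrete_topology VA) f" "finite VA"
    using A f unfolding fin_conn_graph_def confluent_epi_def epimorphism_def by auto
  then show "\<exists>f :: 'a \<Rightarrow> nat. finite (f ` V) \<and>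
      continuous_map (top_of_set V) (discrete_topology (f ` V)) f \<and>
      (\<forall>x\<in>V. \<forall>y\<in>V. f x = f y \<longrightarrow> dist x y < e)"
    using small by (intro exI[of _ f]) simp
qed

lemma fraisse_limit_G_connected:
  assumes F: "fraisse_limit_G V E"
  shows "gr_connected (top_of_set V) E V"
proof -
  have "\<not> gr_disconnected (top_of_set V) E V"
  proof
    assume "gr_disconnected (top_of_set V) E V"
    moreover have "subtopology (top_of_set V) V = top_of_set V"
      by (simp add: subtopology_subtopology)
    ultimately obtain P Q where PQ: "P \<noteq> {}" "Q \<noteq> {}" "P \<union> Q = V" "P \<inter> Q = {}"
      and closed: "closedin (top_of_set V) P" "closedin (top_of_set V) Q"
      and noedge: "\<forall>p\<in>P. \<forall>q\<in>Q. (p, q) \<notin> E"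
      unfolding gr_disconnected_def by (simp only:) blast
    have "closed P" "closed Q"
      using closed closedin_compact fraisse_limit_G_topological(1)[OF F] compact_imp_closed by blast+
    moreover have "V \<subseteq> \<Union>{- P, - Q}"
      using PQ(4) by auto
    ultimately obtain d where "d > 0" and d: "\<And>x. x \<in> V \<Longrightarrow> \<exists>G\<in>{- P, - Q}. ball x d \<subseteq> G"
      using Heine_Borel_lemma[OF fraisse_limit_G_topological(1)[OF F]] by (metis empty_iff insert_iff open_Compl)
    obtain VA EA f where A: "fin_conn_graph VA EA"
      and f: "confluent_epi (top_of_set V) E (discrete_topology VA) EA f"
      and small: "\<And>x y. x \<in> V \<Longrightarrow> y \<in> V \<Longrightarrow> f x = f y \<Longrightarrow> dist x y < d"
      using fraisse_limit_G_fine_epi[OF F \<open>d > 0\<close>] by blast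
    have fV: "f ` V = VA" and lift: "(\<lambda>(u, w). (f u, f w)) ` E = EA"
      using f unfolding confluent_epi_def epimorphism_def by auto
    have apart: "f p \<noteq> f q" if "p \<in> P" "q \<in> Q" for p q
    proof
      assume "f p = f q"
      then have "q \<in> ball p d" "p \<in> ball p d"
        using small[of p q] that PQ(3) \<open>d > 0\<close> by auto
      then show False
        using d[of p] that PQ(3) by blast
    qed
    have "f ` P \<noteq> {}" "f ` Q \<noteq> {}" "f ` P \<union> f ` Q = VA" "f ` P \<inter> f ` Q = {}"
      using PQ fV apart by (auto simp flip: image_Un)
    moreover have "\<not> (\<exists>P' Q'. P' \<noteq> {} \<and> Q' \<noteq> {} \<and> P' \<union> Q' = VA \<and> P' \<inter> Q' = {} \<and>
        (\<forall>p\<in>P'. \<forall>q\<in>Q'. (p, q) \<notin> EA))"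
      using A unfolding fin_conn_graph_def gr_connected_discrete by blast
    ultimately have "\<not> (\<forall>a\<in>f ` P. \<forall>b\<in>f ` Q. (a, b) \<notin> EA)"
      by (metis (no_types, lifting))
    then obtain a b where "a \<in> f ` P" "b \<in> f ` Q" "(a, b) \<in> EA"
      by blast
    then obtain u w where "(u, w) \<in> E" "f u = a" "f w = b" "u \<in> V" "w \<in> V"
      using lift fraisse_limit_G_topological(3)[OF F] unfolding is_graph_def by auto
    moreover obtain p q where "p \<in> P" "f p = a" "q \<in> Q" "f q = b"
      using \<open>a \<in> f ` P\<close> \<open>b \<in> f ` Q\<close> by blast
    then have "u \<notin> Q" "w \<notin> P"
      using apart[of p u] apart[of w q] \<open>f u = a\<close> \<open>f w = b\<close> by auto
    ultimately have "u \<in> P" "w \<in> Q"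
      using PQ(3) by blast+
    then show False
      using noedge \<open>(u, w) \<in> E\<close> by blast
  qed
  then show ?thesis
    unfolding gr_connected_def by simp
qed

lemma fraisse_limit_G_non_adjacent:
  assumes F: "fraisse_limit_G V E"
  obtains x y where "x \<in> V" "y \<in> V" "(x, y) \<notin> E"
proof -
  obtain f where "confluent_epi (top_of_set V) E (discrete_topology {0, 1, 2})
      ({0, 1, 2} \<times> {0, 1, 2 :: nat}) f"
    using F fin_conn_graph_triangle unfolding fraisse_limit_G_def by blast
  then have "f ` V = {0, 1, 2}"
    unfolding confluent_epi_def epimorphism_def by simp
  then have "0 \<in> f ` V" "1 \<in> f ` V" "2 \<in> f ` V"
    by simp_all
  then obtain x y z where "x \<in> V" "y \<in> V" "z \<in> V" "f x = 0" "f y = 1" "f z = 2"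
    by (elim imageE) simp
  moreover from this have "x \<noteq> y" "y \<noteq> z" "x \<noteq> z"
    by auto
  ultimately show thesis
  proof (cases "(x, y) \<in> E")
    case True
    then have "(y, z) \<notin> E"
      using fraisse_limit_G_no_path[OF F] \<open>x \<noteq> y\<close> \<open>y \<noteq> z\<close> \<open>x \<noteq> z\<close> by blast
    then show thesis
      using that \<open>y \<in> V\<close> \<open>z \<in> V\<close> by blast
  next
    case False
    then show thesis
      using that \<open>x \<in> V\<close> \<open>y \<in> V\<close> by blast
  qed
qed

theorem mainTheorem5:
  fixes V :: "'a::metric_space set" and E :: "('a \<times> 'a) set"
  assumes "fraisse_limit_G V E"
  shows "covering_dim_eq (realization (top_of_set V) E) 1"
proof -
  let ?R = "realization (top_of_set V) E"
  note topological = fraisse_limit_G_topological[OF assms]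
  have equiv: "equiv V E"
    by (rule fraisse_limit_G_equiv[OF assms])
  have "covering_dim_le ?R 1"
  proof (rule covering_dim_le_1_realization[OF topological(1,2) equiv topological(4)])
    show "y = z" if "(x, y) \<in> E" "(x, z) \<in> E" "y \<noteq> x" "z \<noteq> x" for x y z
      using fraisse_limit_G_class_two[OF assms that] .
  qed (rule fraisse_limit_G_fine_maps[OF assms])
  moreover obtain x y where "x \<in> V" "y \<in> V" "(x, y) \<notin> E"
    using fraisse_limit_G_non_adjacent[OF assms] by blast
  moreover have "connected_space ?R"
    using connected_space_realization[of "top_of_set V" E] equiv fraisse_limit_G_connected[OF assms]
    by simp
  ultimately have "\<not> covering_dim_le ?R 0"
    using not_covering_dim_le_0_if_connected closedin_realization_class[OF topological(2) equiv]
      equiv_class_eq_iff[OF equiv] by metis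
  with \<open>covering_dim_le ?R 1\<close> show ?thesis
    unfolding covering_dim_eq_def by (simp add: less_one)
qed

end
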